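(* Let $C$ be the Cantor set, $\mathcal{H}$ the algebra of its clopen subsets, $\mathcal{K}$ the family of its compact subsets, and let $\psi_{\mathcal{H}}\colon\mathcal{H}\to\mathbb{R}$ be an increasing submodular setfunction with $\psi_{\mathcal{H}}(\emptyset)=0$. Define $\psi_{\mathcal{K}}\colon\mathcal{K}\to\mathbb{R}$ by $\psi_{\mathcal{K}}(K)=\inf\{\psi_{\mathcal{H}}(H)\colon H\in\mathcal{H},\ K\subseteq H\}$. Then $\psi_{\mathcal{K}}$ is increasing, submodular and continuous from the right.
   Context: A setfunction $\varphi$ on a family $\mathcal{F}$ of sets closed under finite union and intersection is increasing if $X\subseteq Y$ implies $\varphi(X)\le\varphi(Y)$, and submodular if $\varphi(X)+\varphi(Y)\ge\varphi(X\cap Y)+\varphi(X\cup Y)$ for all $X,Y\in\mathcal{F}$. An increasing setfunction $\varphi$ on the compact subsets of a topological space is continuous from the right if for every $\varepsilon>0$ and every compact $K$ there is an open set $U\supseteq K$ such that $\varphi(K')<\varphi(K)+\varepsilon$ for every compact $K'\subseteq U$. *)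

theory Defs
  imports "HOL-Analysis.Analysis"
begin

fun cantor_stage :: "nat \<Rightarrow> real set" where
  "cantor_stage 0 = {0..1}"
| "cantor_stage (Suc n) =
     (\<lambda>x. x / 3) ` cantor_stage n \<union> (\<lambda>x. x / 3 + 2 / 3) ` cantor_stage n"

definition cantor_set :: "real set" where
  "cantor_set = (\<Inter>n. cantor_stage n)"

definition cantor_clopens :: "real set set" where
  "cantor_clopens = {H. openin (top_of_set cantor_set) H \<and> closedin (top_of_set cantor_set) H}"

definition cantor_compacts :: "real set set" where
  "cantor_compacts = {K. compactin (top_of_set cantor_set) K}"

definition increasing_setfun :: "'a set set \<Rightarrow> ('a set \<Rightarrow> real) \<Rightarrow> bool" where
  "increasing_setfun F \<phi> \<longleftrightarrow> (\<forall>X\<in>F. \<forall>Y\<in>F. X \<subseteq> Y \<longrightarrow> \<phi> X \<le> \<phi> Y)"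

definition submodular_setfun :: "'a set set \<Rightarrow> ('a set \<Rightarrow> real) \<Rightarrow> bool" where
  "submodular_setfun F \<phi> \<longleftrightarrow>
     (\<forall>X\<in>F. \<forall>Y\<in>F. \<phi> X + \<phi> Y \<ge> \<phi> (X \<inter> Y) + \<phi> (X \<union> Y))"

definition continuous_from_right :: "'a topology \<Rightarrow> ('a set \<Rightarrow> real) \<Rightarrow> bool" where
  "continuous_from_right T \<phi> \<longleftrightarrow>
     (\<forall>\<epsilon>>0. \<forall>K. compactin T K \<longrightarrow>
        (\<exists>U. openin T U \<and> K \<subseteq> U \<and>
             (\<forall>K'. compactin T K' \<and> K' \<subseteq> U \<longrightarrow> \<phi> K' < \<phi> K + \<epsilon>)))"

end

theory Submission
  imports Defs
begin

text \<open>The infimum of \<open>\<psi>\<^sub>H\<close> over clopen neighbourhoods can be approximated by a single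
  clopen \<open>H \<supseteq> K\<close>. Monotonicity of \<open>\<psi>\<^sub>K\<close> is inherited because a neighbourhood of the
  larger set is one of the smaller; submodularity because \<open>H\<^sub>1 \<inter> H\<^sub>2\<close> and \<open>H\<^sub>1 \<union> H\<^sub>2\<close>
  are neighbourhoods of \<open>K\<^sub>1 \<inter> K\<^sub>2\<close> and \<open>K\<^sub>1 \<union> K\<^sub>2\<close>; and continuity from the right
  because the approximating clopen \<open>H\<close> is itself an open set \<open>U\<close> that works.\<close>

definition outer_setfun :: "'a set set \<Rightarrow> ('a set \<Rightarrow> real) \<Rightarrow> 'a set \<Rightarrow> real" where
  "outer_setfun F \<psi> K = Inf {\<psi> H | H. H \<in> F \<and> K \<subseteq> H}"

lemma increasing_setfun_bdd_below:
  assumes "increasing_setfun F \<psi>" and "{} \<in> F" and "\<psi> {} = 0"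
  shows "bdd_below (\<psi> ` F)"
proof
  show "0 \<le> y" if "y \<in> \<psi> ` F" for y
    using assms that unfolding increasing_setfun_def by force
qed

lemma outer_setfun_le:
  assumes "bdd_below (\<psi> ` F)" and "H \<in> F" and "K \<subseteq> H"
  shows "outer_setfun F \<psi> K \<le> \<psi> H"
  unfolding outer_setfun_def
proof (rule cInf_lower)
  show "bdd_below {\<psi> H | H. H \<in> F \<and> K \<subseteq> H}"
    using assms(1) by (rule bdd_below_mono) blast
qed (use assms in blast)

lemma outer_setfun_approx:
  assumes "H\<^sub>0 \<in> F" and "K \<subseteq> H\<^sub>0" and "e > 0"
  obtains H where "H \<in> F" "K \<subseteq> H" "\<psi> H < outer_setfun F \<psi> K + e"
proof -
  have "{\<psi> H | H. H \<in> F \<and> K \<subseteq> H} \<noteq> {}"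
    using assms by blast
  from cInf_lessD[OF this, of "outer_setfun F \<psi> K + e"] assms(3)
  show ?thesis
    using that unfolding outer_setfun_def by auto
qed

lemma outer_setfun_mono:
  assumes "bdd_below (\<psi> ` F)" and "H\<^sub>0 \<in> F" and "K' \<subseteq> H\<^sub>0" and "K \<subseteq> K'"
  shows "outer_setfun F \<psi> K \<le> outer_setfun F \<psi> K'"
  unfolding outer_setfun_def
proof (rule cInf_superset_mono)
  show "bdd_below {\<psi> H | H. H \<in> F \<and> K \<subseteq> H}"
    using assms(1) by (rule bdd_below_mono) blast
qed (use assms in auto)

lemma outer_setfun_submodular_pair:
  assumes "bdd_below (\<psi> ` F)" and "submodular_setfun F \<psi>"
    and "\<And>A B. A \<in> F \<Longrightarrow> B \<in> F \<Longrightarrow> A \<inter> B \<in> F \<and> A \<union> B \<in> F"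
    and "G\<^sub>1 \<in> F" "K\<^sub>1 \<subseteq> G\<^sub>1" and "G\<^sub>2 \<in> F" "K\<^sub>2 \<subseteq> G\<^sub>2"
  shows "outer_setfun F \<psi> (K\<^sub>1 \<inter> K\<^sub>2) + outer_setfun F \<psi> (K\<^sub>1 \<union> K\<^sub>2)
           \<le> outer_setfun F \<psi> K\<^sub>1 + outer_setfun F \<psi> K\<^sub>2"
proof (rule field_le_epsilon)
  fix e :: real
  assume "e > 0"
  then have "e/2 > 0"
    by simp
  obtain H\<^sub>1 where H\<^sub>1: "H\<^sub>1 \<in> F" "K\<^sub>1 \<subseteq> H\<^sub>1" "\<psi> H\<^sub>1 < outer_setfun F \<psi> K\<^sub>1 + e/2"
    using outer_setfun_approx[OF assms(4,5) \<open>e/2 > 0\<close>] .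
  obtain H\<^sub>2 where H\<^sub>2: "H\<^sub>2 \<in> F" "K\<^sub>2 \<subseteq> H\<^sub>2" "\<psi> H\<^sub>2 < outer_setfun F \<psi> K\<^sub>2 + e/2"
    using outer_setfun_approx[OF assms(6,7) \<open>e/2 > 0\<close>] .
  have "outer_setfun F \<psi> (K\<^sub>1 \<inter> K\<^sub>2) \<le> \<psi> (H\<^sub>1 \<inter> H\<^sub>2)"
    using H\<^sub>1 H\<^sub>2 assms(3) by (intro outer_setfun_le[OF assms(1)]) auto
  moreover have "outer_setfun F \<psi> (K\<^sub>1 \<union> K\<^sub>2) \<le> \<psi> (H\<^sub>1 \<union> H\<^sub>2)"
    using H\<^sub>1 H\<^sub>2 assms(3) by (intro outer_setfun_le[OF assms(1)]) auto
  moreover have "\<psi> (H\<^sub>1 \<inter> H\<^sub>2) + \<psi> (H\<^sub>1 \<union> H\<^sub>2) \<le> \<psi> H\<^sub>1 + \<psi> H\<^sub>2"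
    using assms(2) H\<^sub>1(1) H\<^sub>2(1) unfolding submodular_setfun_def by blast
  ultimately show "outer_setfun F \<psi> (K\<^sub>1 \<inter> K\<^sub>2) + outer_setfun F \<psi> (K\<^sub>1 \<union> K\<^sub>2)
      \<le> outer_setfun F \<psi> K\<^sub>1 + outer_setfun F \<psi> K\<^sub>2 + e"
    using H\<^sub>1(3) H\<^sub>2(3) by linarith
qed

lemma increasing_outer_setfun:
  assumes "bdd_below (\<psi> ` F)" and "\<And>K. K \<in> C \<Longrightarrow> \<exists>H\<in>F. K \<subseteq> H"
  shows "increasing_setfun C (outer_setfun F \<psi>)"
  unfolding increasing_setfun_def
proof (intro ballI impI)
  fix X Y
  assume "X \<in> C" "Y \<in> C" "X \<subseteq> Y"
  then obtain H where "H \<in> F" "Y \<subseteq> H"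
    using assms(2) by blast
  then show "outer_setfun F \<psi> X \<le> outer_setfun F \<psi> Y"
    using \<open>X \<subseteq> Y\<close> by (rule outer_setfun_mono[OF assms(1)])
qed

lemma submodular_outer_setfun:
  assumes "bdd_below (\<psi> ` F)" and "submodular_setfun F \<psi>"
    and "\<And>A B. A \<in> F \<Longrightarrow> B \<in> F \<Longrightarrow> A \<inter> B \<in> F \<and> A \<union> B \<in> F"
    and "\<And>K. K \<in> C \<Longrightarrow> \<exists>H\<in>F. K \<subseteq> H"
  shows "submodular_setfun C (outer_setfun F \<psi>)"
  unfolding submodular_setfun_def
proof (intro ballI)
  fix X Y
  assume "X \<in> C" "Y \<in> C"
  then obtain G\<^sub>1 G\<^sub>2 where G: "G\<^sub>1 \<in> F" "X \<subseteq> G\<^sub>1" "G\<^sub>2 \<in> F" "Y \<subseteq> G\<^sub>2"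
    using assms(4) by meson
  show "outer_setfun F \<psi> X + outer_setfun F \<psi> Y
      \<ge> outer_setfun F \<psi> (X \<inter> Y) + outer_setfun F \<psi> (X \<union> Y)"
    by (rule outer_setfun_submodular_pair[OF assms(1-3) G])
qed

lemma continuous_from_right_outer_setfun:
  assumes "bdd_below (\<psi> ` F)" and "\<And>H. H \<in> F \<Longrightarrow> openin T H" and "topspace T \<in> F"
  shows "continuous_from_right T (outer_setfun F \<psi>)"
  unfolding continuous_from_right_def
proof (intro allI impI)
  fix e :: real and K
  assume "e > 0" and "compactin T K"
  moreover have "K \<subseteq> topspace T"
    using \<open>compactin T K\<close> by (rule compactin_subset_topspace)
  ultimately obtain H where H: "H \<in> F" "K \<subseteq> H" "\<psi> H < outer_setfun F \<psi> K + e"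
    using outer_setfun_approx[OF assms(3)] by blast
  show "\<exists>U. openin T U \<and> K \<subseteq> U \<and>
      (\<forall>K'. compactin T K' \<and> K' \<subseteq> U \<longrightarrow> outer_setfun F \<psi> K' < outer_setfun F \<psi> K + e)"
  proof (intro exI conjI allI impI)
    show "openin T H"
      using assms(2) H(1) .
    fix K'
    assume "compactin T K' \<and> K' \<subseteq> H"
    then have "outer_setfun F \<psi> K' \<le> \<psi> H"
      using outer_setfun_le[OF assms(1) H(1)] by blast
    with H(3) show "outer_setfun F \<psi> K' < outer_setfun F \<psi> K + e"
      by linarith
  qed (fact H(2))
qed

lemma cantor_clopens_Int_Un:
  "A \<in> cantor_clopens \<Longrightarrow> B \<in> cantor_clopens \<Longrightarrow> A \<inter> B \<in> cantor_clopens \<and> A \<union> B \<in> cantor_clopens"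
  unfolding cantor_clopens_def by auto

lemma cantor_set_in_cantor_clopens: "cantor_set \<in> cantor_clopens"
  unfolding cantor_clopens_def by simp

lemma empty_in_cantor_clopens: "{} \<in> cantor_clopens"
  unfolding cantor_clopens_def by simp

lemma cantor_compacts_subset: "K \<in> cantor_compacts \<Longrightarrow> K \<subseteq> cantor_set"
  unfolding cantor_compacts_def using compactin_subset_topspace by fastforce

theorem lemma3p6:
  fixes \<psi>H :: "real set \<Rightarrow> real" and \<psi>K :: "real set \<Rightarrow> real"
  assumes "increasing_setfun cantor_clopens \<psi>H"
    and "submodular_setfun cantor_clopens \<psi>H"
    and "\<psi>H {} = 0"
    and "\<And>K. \<psi>K K = Inf {\<psi>H H | H. H \<in> cantor_clopens \<and> K \<subseteq> H}"
  shows "increasing_setfun cantor_compacts \<psi>K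
       \<and> submodular_setfun cantor_compacts \<psi>K
       \<and> continuous_from_right (top_of_set cantor_set) \<psi>K"
proof -
  have \<psi>K: "\<psi>K = outer_setfun cantor_clopens \<psi>H"
    using assms(4) unfolding outer_setfun_def by blast
  have bdd: "bdd_below (\<psi>H ` cantor_clopens)"
    by (rule increasing_setfun_bdd_below[OF assms(1) empty_in_cantor_clopens assms(3)])
  have cover: "\<exists>H\<in>cantor_clopens. K \<subseteq> H" if "K \<in> cantor_compacts" for K
    using that cantor_compacts_subset cantor_set_in_cantor_clopens by blast
  have "continuous_from_right (top_of_set cantor_set) \<psi>K"
    unfolding \<psi>K
    by (rule continuous_from_right_outer_setfun[OF bdd])
      (use cantor_set_in_cantor_clopens in \<open>auto simp: cantor_clopens_def\<close>)
  then show ?thesis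
    unfolding \<psi>K
    using increasing_outer_setfun[OF bdd cover]
      submodular_outer_setfun[OF bdd assms(2) cantor_clopens_Int_Un cover]
    by blast
qed

end
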